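(* Let $\Gamma$ be a distance-regular graph with diameter $D\ge 3$, and let $\sigma_0,\dots,\sigma_D$ and $\rho_0,\dots,\rho_D$ be nontrivial pseudo cosine sequences of $\Gamma$. Then the following are equivalent: (i) $\sigma_0,\dots,\sigma_D$ and $\rho_0,\dots,\rho_D$ form a tight pair; (ii) there exists a real number $\varepsilon$ such that $$\sigma_i\rho_i-\sigma_{i-1}\rho_{i-1}=\varepsilon(\sigma_{i-1}\rho_i-\sigma_i\rho_{i-1})\qquad(1\le i\le D).$$
   Context: $\Gamma$ is a finite connected undirected graph without loops or multiple edges, distance-regular with diameter $D$, intersection numbers $a_i,b_i,c_i$ ($c_0=0$, $b_D=0$), valency $k$, $c_i+a_i+b_i=k$. For $\theta\in\mathbb{R}$ the pseudo cosine sequence for $\theta$ is the sequence of reals $\sigma_0,\dots,\sigma_D$ with $\sigma_0=1$ and $c_i\sigma_{i-1}+a_i\sigma_i+b_i\sigma_{i+1}=\theta\sigma_i$ for $0\le i\le D-1$. It is nontrivial if $\sigma_1\ne1$ (the trivial one is that for $\theta=k$, all ones). Pseudo cosine sequences $\sigma_i$, $\rho_i$ form a tight pair if $(\sigma_i\rho_i)_{i=0}^D$ is a pseudo cosine sequence. *)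

theory Defs
  imports Complex_Main
begin

definition simple_graph :: "'a set \<Rightarrow> ('a \<Rightarrow> 'a \<Rightarrow> bool) \<Rightarrow> bool" where
  "simple_graph V E \<longleftrightarrow> (\<forall>x y. E x y \<longrightarrow> x \<in> V \<and> y \<in> V \<and> x \<noteq> y \<and> E y x)"

definition walk :: "('a \<Rightarrow> 'a \<Rightarrow> bool) \<Rightarrow> 'a list \<Rightarrow> bool" where
  "walk E xs \<longleftrightarrow> xs \<noteq> [] \<and> (\<forall>i. Suc i < length xs \<longrightarrow> E (xs ! i) (xs ! Suc i))"

definition dist_g :: "('a \<Rightarrow> 'a \<Rightarrow> bool) \<Rightarrow> 'a \<Rightarrow> 'a \<Rightarrow> nat" where
  "dist_g E x y = (LEAST n. \<exists>xs. walk E xs \<and> length xs = Suc n \<and> hd xs = x \<and> last xs = y)"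

definition connected_g :: "'a set \<Rightarrow> ('a \<Rightarrow> 'a \<Rightarrow> bool) \<Rightarrow> bool" where
  "connected_g V E \<longleftrightarrow> (\<forall>x\<in>V. \<forall>y\<in>V. \<exists>xs. walk E xs \<and> hd xs = x \<and> last xs = y)"

definition diameter :: "'a set \<Rightarrow> ('a \<Rightarrow> 'a \<Rightarrow> bool) \<Rightarrow> nat" where
  "diameter V E = Max {dist_g E x y | x y. x \<in> V \<and> y \<in> V}"

definition c_cnt :: "'a set \<Rightarrow> ('a \<Rightarrow> 'a \<Rightarrow> bool) \<Rightarrow> 'a \<Rightarrow> 'a \<Rightarrow> nat" where
  "c_cnt V E x y = card {z \<in> V. E y z \<and> dist_g E x z + 1 = dist_g E x y}"
definition a_cnt :: "'a set \<Rightarrow> ('a \<Rightarrow> 'a \<Rightarrow> bool) \<Rightarrow> 'a \<Rightarrow> 'a \<Rightarrow> nat" where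
  "a_cnt V E x y = card {z \<in> V. E y z \<and> dist_g E x z = dist_g E x y}"
definition b_cnt :: "'a set \<Rightarrow> ('a \<Rightarrow> 'a \<Rightarrow> bool) \<Rightarrow> 'a \<Rightarrow> 'a \<Rightarrow> nat" where
  "b_cnt V E x y = card {z \<in> V. E y z \<and> dist_g E x z = dist_g E x y + 1}"

definition distance_regular :: "'a set \<Rightarrow> ('a \<Rightarrow> 'a \<Rightarrow> bool) \<Rightarrow> bool" where
  "distance_regular V E \<longleftrightarrow> finite V \<and> V \<noteq> {} \<and> simple_graph V E \<and> connected_g V E \<and>
     (\<forall>i. \<exists>n. \<forall>x\<in>V. \<forall>y\<in>V. dist_g E x y = i \<longrightarrow> c_cnt V E x y = n) \<and>
     (\<forall>i. \<exists>n. \<forall>x\<in>V. \<forall>y\<in>V. dist_g E x y = i \<longrightarrow> a_cnt V E x y = n) \<and>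
     (\<forall>i. \<exists>n. \<forall>x\<in>V. \<forall>y\<in>V. dist_g E x y = i \<longrightarrow> b_cnt V E x y = n)"

text \<open>Intersection numbers c_i, a_i, b_i (meaningful for a distance-regular graph, 0 \<le> i \<le> D).\<close>
definition c_i :: "'a set \<Rightarrow> ('a \<Rightarrow> 'a \<Rightarrow> bool) \<Rightarrow> nat \<Rightarrow> nat" where
  "c_i V E i = (SOME n. \<forall>x\<in>V. \<forall>y\<in>V. dist_g E x y = i \<longrightarrow> c_cnt V E x y = n)"
definition a_i :: "'a set \<Rightarrow> ('a \<Rightarrow> 'a \<Rightarrow> bool) \<Rightarrow> nat \<Rightarrow> nat" where
  "a_i V E i = (SOME n. \<forall>x\<in>V. \<forall>y\<in>V. dist_g E x y = i \<longrightarrow> a_cnt V E x y = n)"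
definition b_i :: "'a set \<Rightarrow> ('a \<Rightarrow> 'a \<Rightarrow> bool) \<Rightarrow> nat \<Rightarrow> nat" where
  "b_i V E i = (SOME n. \<forall>x\<in>V. \<forall>y\<in>V. dist_g E x y = i \<longrightarrow> b_cnt V E x y = n)"

text \<open>Pseudo cosine sequence for \<theta>: sequence \<sigma>_0..\<sigma>_D (as nat \<Rightarrow> real; values beyond D irrelevant).
  For i = 0 the term c_0 \<sigma>_{-1} vanishes since c_0 = 0 (here \<sigma>(0-1) = \<sigma> 0 is multiplied by c_0).\<close>
definition pseudo_cosine_seq :: "'a set \<Rightarrow> ('a \<Rightarrow> 'a \<Rightarrow> bool) \<Rightarrow> real \<Rightarrow> (nat \<Rightarrow> real) \<Rightarrow> bool" where
  "pseudo_cosine_seq V E \<theta> \<sigma> \<longleftrightarrow> \<sigma> 0 = 1 \<and>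
     (\<forall>i < diameter V E.
        real (c_i V E i) * \<sigma> (i - 1) + real (a_i V E i) * \<sigma> i + real (b_i V E i) * \<sigma> (i + 1) = \<theta> * \<sigma> i)"

definition is_pseudo_cosine :: "'a set \<Rightarrow> ('a \<Rightarrow> 'a \<Rightarrow> bool) \<Rightarrow> (nat \<Rightarrow> real) \<Rightarrow> bool" where
  "is_pseudo_cosine V E \<sigma> \<longleftrightarrow> (\<exists>\<theta>. pseudo_cosine_seq V E \<theta> \<sigma>)"

definition nontrivial_pcs :: "'a set \<Rightarrow> ('a \<Rightarrow> 'a \<Rightarrow> bool) \<Rightarrow> (nat \<Rightarrow> real) \<Rightarrow> bool" where
  "nontrivial_pcs V E \<sigma> \<longleftrightarrow> is_pseudo_cosine V E \<sigma> \<and> \<sigma> 1 \<noteq> 1"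

definition tight_pair :: "'a set \<Rightarrow> ('a \<Rightarrow> 'a \<Rightarrow> bool) \<Rightarrow> (nat \<Rightarrow> real) \<Rightarrow> (nat \<Rightarrow> real) \<Rightarrow> bool" where
  "tight_pair V E \<sigma> \<rho> \<longleftrightarrow> is_pseudo_cosine V E \<sigma> \<and> is_pseudo_cosine V E \<rho> \<and>
     is_pseudo_cosine V E (\<lambda>i. \<sigma> i * \<rho> i)"

end

theory Submission
  imports Defs
begin

text \<open>With k = b_0 and \<sigma>_0 = 1, a pseudo cosine sequence has \<theta> = k \<sigma>_1 and satisfies
  b_i (\<sigma>_{i+1} - \<sigma>_i) = k (\<sigma>_1 - 1) \<sigma>_i + c_i (\<sigma>_i - \<sigma>_{i-1}). Hence the product \<sigma>\<rho>
  satisfies the recurrence for k \<sigma>_1 \<rho>_1 up to a defect T_i (product_defect), and the pair is tight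
  iff T_i = 0 for all i < D. If \<Phi>_i(\<epsilon>) (epsilon_defect) is the difference of the two sides of (ii), then
  b_i \<Phi>_{i+1}(\<epsilon>) - c_i \<Phi>_i(\<epsilon>) = T_i + k \<sigma>_i \<rho>_i \<Phi>_1(\<epsilon>). So (ii) forces T = 0. Conversely, if
  T = 0 then \<Phi>_1(\<epsilon>) = 0 propagates upwards because b_i > 0, and
  \<Phi>_1(\<epsilon>) = \<sigma>_1 \<rho>_1 - 1 - \<epsilon> (\<rho>_1 - \<sigma>_1) has a root unless \<sigma>_1 = \<rho>_1; in that case T_1 = 0 is
  a quadratic equation in \<sigma>_1 whose only root is -1, where \<Phi>_1 vanishes identically.\<close>

locale intersection_array =
  fixes D :: nat and k :: real and a b c :: "nat \<Rightarrow> real"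
  assumes two_le_D: "2 \<le> D"
    and c_0: "c 0 = 0" and b_0: "b 0 = k" and c_1: "c 1 = 1"
    and row_sum: "\<And>i. i < D \<Longrightarrow> a i + b i + c i = k"
    and b_pos: "\<And>i. i < D \<Longrightarrow> 0 < b i"
    and a_nonneg: "\<And>i. 0 \<le> a i"
begin

definition pseudo_cosine :: "real \<Rightarrow> (nat \<Rightarrow> real) \<Rightarrow> bool" where
  "pseudo_cosine \<theta> s \<longleftrightarrow> s 0 = 1 \<and>
     (\<forall>i<D. c i * s (i - 1) + a i * s i + b i * s (i + 1) = \<theta> * s i)"

definition product_defect :: "(nat \<Rightarrow> real) \<Rightarrow> (nat \<Rightarrow> real) \<Rightarrow> nat \<Rightarrow> real" where
  "product_defect s r i =
     c i * (s i - s (i - 1)) * (r i - r (i - 1)) + b i * (s (i + 1) - s i) * (r (i + 1) - r i)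
     - k * (s 1 - 1) * (r 1 - 1) * s i * r i"

definition epsilon_defect :: "real \<Rightarrow> (nat \<Rightarrow> real) \<Rightarrow> (nat \<Rightarrow> real) \<Rightarrow> nat \<Rightarrow> real" where
  "epsilon_defect \<epsilon> s r i = s i * r i - s (i - 1) * r (i - 1) - \<epsilon> * (s (i - 1) * r i - s i * r (i - 1))"

lemma a_0: "a 0 = 0"
  using row_sum[of 0] two_le_D c_0 b_0 by simp

lemma pseudo_cosine_0: "pseudo_cosine \<theta> s \<Longrightarrow> s 0 = 1"
  unfolding pseudo_cosine_def by simp

lemma pseudo_cosine_eigenvalue:
  assumes "pseudo_cosine \<theta> s"
  shows "\<theta> = k * s 1"
proof -
  have "0 < D"
    using two_le_D by simp
  then have "c 0 * s (0 - 1) + a 0 * s 0 + b 0 * s (0 + 1) = \<theta> * s 0"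
    using assms unfolding pseudo_cosine_def by blast
  then show ?thesis
    using pseudo_cosine_0[OF assms] by (simp add: c_0 a_0 b_0)
qed

lemma pseudo_cosine_diff_recurrence:
  assumes "pseudo_cosine \<theta> s" and "i < D"
  shows "b i * (s (i + 1) - s i) = k * (s 1 - 1) * s i + c i * (s i - s (i - 1))"
proof -
  have a_eq: "a i = k - b i - c i"
    using row_sum[OF assms(2)] by simp
  have "c i * s (i - 1) + a i * s i + b i * s (i + 1) = \<theta> * s i"
    using assms unfolding pseudo_cosine_def by blast
  then have "c i * s (i - 1) + (k - b i - c i) * s i + b i * s (i + 1) = k * s 1 * s i"
    unfolding a_eq pseudo_cosine_eigenvalue[OF assms(1)] .
  then show ?thesis
    by (simp add: algebra_simps)
qed

lemma product_defect_0:
  assumes "pseudo_cosine \<theta> s" and "pseudo_cosine \<eta> r"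
  shows "product_defect s r 0 = 0"
  using pseudo_cosine_0[OF assms(1)] pseudo_cosine_0[OF assms(2)]
  unfolding product_defect_def by (simp add: c_0 b_0)

lemma product_recurrence:
  assumes s: "pseudo_cosine \<theta> s" and r: "pseudo_cosine \<eta> r" and "i < D"
  shows "c i * (s (i - 1) * r (i - 1)) + a i * (s i * r i) + b i * (s (i + 1) * r (i + 1))
    = k * s 1 * r 1 * (s i * r i) + product_defect s r i"
proof -
  define \<delta>s where "\<delta>s = b i * (s (i + 1) - s i) - k * (s 1 - 1) * s i - c i * (s i - s (i - 1))"
  define \<delta>r where "\<delta>r = b i * (r (i + 1) - r i) - k * (r 1 - 1) * r i - c i * (r i - r (i - 1))"
  have a_eq: "a i = k - b i - c i"
    using row_sum[OF \<open>i < D\<close>] by simp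
  have "c i * (s (i - 1) * r (i - 1)) + a i * (s i * r i) + b i * (s (i + 1) * r (i + 1))
      - k * s 1 * r 1 * (s i * r i) - product_defect s r i = s i * \<delta>r + r i * \<delta>s"
    unfolding \<delta>s_def \<delta>r_def product_defect_def a_eq by (simp add: algebra_simps)
  moreover have "\<delta>s = 0" "\<delta>r = 0"
    using pseudo_cosine_diff_recurrence[OF s \<open>i < D\<close>] pseudo_cosine_diff_recurrence[OF r \<open>i < D\<close>]
    unfolding \<delta>s_def \<delta>r_def by simp_all
  ultimately show ?thesis by simp
qed

lemma pseudo_cosine_product_iff:
  assumes s: "pseudo_cosine \<theta> s" and r: "pseudo_cosine \<eta> r"
  shows "(\<exists>\<zeta>. pseudo_cosine \<zeta> (\<lambda>i. s i * r i)) \<longleftrightarrow> (\<forall>i<D. product_defect s r i = 0)"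
proof
  assume "\<exists>\<zeta>. pseudo_cosine \<zeta> (\<lambda>i. s i * r i)"
  then obtain \<zeta> where sr: "pseudo_cosine \<zeta> (\<lambda>i. s i * r i)" ..
  have "\<zeta> = k * s 1 * r 1"
    using pseudo_cosine_eigenvalue[OF sr] by simp
  then show "\<forall>i<D. product_defect s r i = 0"
    using sr product_recurrence[OF s r] unfolding pseudo_cosine_def by auto
next
  assume "\<forall>i<D. product_defect s r i = 0"
  then have "pseudo_cosine (k * s 1 * r 1) (\<lambda>i. s i * r i)"
    using product_recurrence[OF s r] pseudo_cosine_0[OF s] pseudo_cosine_0[OF r]
    unfolding pseudo_cosine_def by simp
  then show "\<exists>\<zeta>. pseudo_cosine \<zeta> (\<lambda>i. s i * r i)" ..
qed

lemma epsilon_defect_1: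
  assumes "pseudo_cosine \<theta> s" and "pseudo_cosine \<eta> r"
  shows "epsilon_defect \<epsilon> s r 1 = s 1 * r 1 - 1 - \<epsilon> * (r 1 - s 1)"
  using pseudo_cosine_0[OF assms(1)] pseudo_cosine_0[OF assms(2)]
  unfolding epsilon_defect_def by simp

lemma epsilon_defect_recurrence:
  assumes s: "pseudo_cosine \<theta> s" and r: "pseudo_cosine \<eta> r" and "i < D"
  shows "b i * epsilon_defect \<epsilon> s r (i + 1) - c i * epsilon_defect \<epsilon> s r i
    = product_defect s r i + k * s i * r i * epsilon_defect \<epsilon> s r 1"
proof -
  define \<delta>s where "\<delta>s = b i * (s (i + 1) - s i) - k * (s 1 - 1) * s i - c i * (s i - s (i - 1))"
  define \<delta>r where "\<delta>r = b i * (r (i + 1) - r i) - k * (r 1 - 1) * r i - c i * (r i - r (i - 1))"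
  have "b i * epsilon_defect \<epsilon> s r (i + 1) - c i * epsilon_defect \<epsilon> s r i
      - product_defect s r i - k * s i * r i * epsilon_defect \<epsilon> s r 1
      = (1 - \<epsilon>) * s i * \<delta>r + (1 + \<epsilon>) * r i * \<delta>s"
    unfolding \<delta>s_def \<delta>r_def product_defect_def epsilon_defect_1[OF s r]
    by (simp add: epsilon_defect_def algebra_simps)
  moreover have "\<delta>s = 0" "\<delta>r = 0"
    using pseudo_cosine_diff_recurrence[OF s \<open>i < D\<close>] pseudo_cosine_diff_recurrence[OF r \<open>i < D\<close>]
    unfolding \<delta>s_def \<delta>r_def by simp_all
  ultimately show ?thesis by simp
qed

lemma b_1_quadratic_root:
  fixes x :: real
  assumes "b 1 + (k * x + 1)\<^sup>2 - k * b 1 * x\<^sup>2 = 0"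
  shows "x = -1"
proof -
  have k: "k = a 1 + b 1 + 1" and "0 < k" "0 < b 1" "0 \<le> a 1"
    using row_sum[of 1] b_pos[of 0] b_pos[of 1] b_0 c_1 two_le_D a_nonneg[of 1] by simp_all
  have "k * ((1 + a 1) * x + 1)\<^sup>2 + a 1 * b 1 = (1 + a 1) * (b 1 + (k * x + 1)\<^sup>2 - k * b 1 * x\<^sup>2)"
    unfolding k by (simp add: power2_eq_square algebra_simps)
  then have "k * ((1 + a 1) * x + 1)\<^sup>2 + a 1 * b 1 = 0"
    using assms by simp
  moreover have "0 \<le> k * ((1 + a 1) * x + 1)\<^sup>2" "0 \<le> a 1 * b 1"
    using \<open>0 < k\<close> \<open>0 < b 1\<close> \<open>0 \<le> a 1\<close> by simp_all
  ultimately have "a 1 * b 1 = 0" "k * ((1 + a 1) * x + 1)\<^sup>2 = 0"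
    by linarith+
  then show ?thesis
    using \<open>0 < k\<close> \<open>0 < b 1\<close> by simp
qed

lemma product_defect_1_equal_start:
  assumes s: "pseudo_cosine \<theta> s" and r: "pseudo_cosine \<eta> r"
    and "s 1 = r 1" and "s 1 \<noteq> 1" and "product_defect s r 1 = 0"
  shows "s 1 = -1"
proof -
  define g where "g = s 1 - 1"
  have "1 < D"
    using two_le_D by simp
  have s2: "b 1 * (s 2 - s 1) = g * (k * s 1 + 1)"
    using pseudo_cosine_diff_recurrence[OF s \<open>1 < D\<close>] pseudo_cosine_0[OF s] c_1
    by (simp add: g_def algebra_simps numeral_2_eq_2)
  have r2: "b 1 * (r 2 - r 1) = g * (k * s 1 + 1)"
    using pseudo_cosine_diff_recurrence[OF r \<open>1 < D\<close>] pseudo_cosine_0[OF r] c_1 \<open>s 1 = r 1\<close>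
    by (simp add: g_def algebra_simps numeral_2_eq_2)
  have "b 1 * product_defect s r 1
      = g\<^sup>2 * b 1 + (b 1 * (s 2 - s 1)) * (b 1 * (r 2 - r 1)) - k * b 1 * g\<^sup>2 * (s 1)\<^sup>2"
    using pseudo_cosine_0[OF s] pseudo_cosine_0[OF r] c_1 \<open>s 1 = r 1\<close>
    unfolding product_defect_def g_def by (simp add: power2_eq_square algebra_simps numeral_2_eq_2)
  also have "\<dots> = g\<^sup>2 * (b 1 + (k * s 1 + 1)\<^sup>2 - k * b 1 * (s 1)\<^sup>2)"
    unfolding s2 r2 by (simp add: power2_eq_square algebra_simps)
  finally have "g\<^sup>2 * (b 1 + (k * s 1 + 1)\<^sup>2 - k * b 1 * (s 1)\<^sup>2) = 0"
    using \<open>product_defect s r 1 = 0\<close> by simp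
  moreover have "g \<noteq> 0"
    using \<open>s 1 \<noteq> 1\<close> g_def by simp
  ultimately show ?thesis
    by (intro b_1_quadratic_root) simp
qed

lemma epsilon_defect_1_solvable:
  assumes s: "pseudo_cosine \<theta> s" and r: "pseudo_cosine \<eta> r"
    and "s 1 \<noteq> 1" and "product_defect s r 1 = 0"
  obtains \<epsilon> where "epsilon_defect \<epsilon> s r 1 = 0"
proof (cases "s 1 = r 1")
  case True
  then have "s 1 = -1" "r 1 = -1"
    using product_defect_1_equal_start[OF s r] assms(3,4) by simp_all
  then show ?thesis
    using that[of 0] epsilon_defect_1[OF s r] by simp
next
  case False
  then show ?thesis
    using that[of "(s 1 * r 1 - 1) / (r 1 - s 1)"] epsilon_defect_1[OF s r] by simp
qed

theorem pseudo_cosine_product_iff_epsilon: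
  assumes s: "pseudo_cosine \<theta> s" and r: "pseudo_cosine \<eta> r" and "s 1 \<noteq> 1"
  shows "(\<exists>\<zeta>. pseudo_cosine \<zeta> (\<lambda>i. s i * r i)) \<longleftrightarrow> (\<exists>\<epsilon>. \<forall>i\<in>{1..D}. epsilon_defect \<epsilon> s r i = 0)"
  unfolding pseudo_cosine_product_iff[OF s r]
proof
  assume defect: "\<forall>i<D. product_defect s r i = 0"
  obtain \<epsilon> where eps_1: "epsilon_defect \<epsilon> s r 1 = 0"
    using epsilon_defect_1_solvable[OF s r \<open>s 1 \<noteq> 1\<close>] defect two_le_D by auto
  have "epsilon_defect \<epsilon> s r j = 0" if "1 \<le> j" "j \<le> D" for j
    using that
  proof (induction rule: dec_induct)
    case base
    show ?case by (fact eps_1)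
  next
    case (step n)
    then have "b n * epsilon_defect \<epsilon> s r (n + 1) = 0"
      using epsilon_defect_recurrence[OF s r, of n \<epsilon>] defect eps_1 by simp
    then show ?case
      using b_pos[of n] step by simp
  qed
  then show "\<exists>\<epsilon>. \<forall>i\<in>{1..D}. epsilon_defect \<epsilon> s r i = 0"
    by (intro exI[of _ \<epsilon>]) auto
next
  assume "\<exists>\<epsilon>. \<forall>i\<in>{1..D}. epsilon_defect \<epsilon> s r i = 0"
  then obtain \<epsilon> where eps: "\<And>i. 1 \<le> i \<Longrightarrow> i \<le> D \<Longrightarrow> epsilon_defect \<epsilon> s r i = 0"
    by force
  show "\<forall>i<D. product_defect s r i = 0"
  proof (intro allI impI)
    fix i assume "i < D"
    show "product_defect s r i = 0"
    proof (cases "i = 0")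
      case True
      then show ?thesis using product_defect_0[OF s r] by simp
    next
      case False
      then show ?thesis
        using epsilon_defect_recurrence[OF s r \<open>i < D\<close>, of \<epsilon>] eps[of i] eps[of "i + 1"] eps[of 1]
          \<open>i < D\<close> by simp
    qed
  qed
qed

end

lemma walk_snoc:
  assumes "walk E xs" and "E (last xs) z"
  shows "walk E (xs @ [z])"
  using assms unfolding walk_def by (auto simp: nth_append last_conv_nth less_Suc_eq dest: sym)

lemma walk_take: "walk E xs \<Longrightarrow> 0 < n \<Longrightarrow> walk E (take n xs)"
  unfolding walk_def by auto

lemma dist_g_le_walk:
  assumes "walk E xs" and "hd xs = x" and "last xs = y"
  shows "dist_g E x y \<le> length xs - 1"
proof -
  have "length xs = Suc (length xs - 1)"
    using assms(1) unfolding walk_def by simp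
  then have "\<exists>ys. walk E ys \<and> length ys = Suc (length xs - 1) \<and> hd ys = x \<and> last ys = y"
    using assms by blast
  then show ?thesis
    unfolding dist_g_def by (rule Least_le)
qed

lemma dist_g_shortest_walk:
  assumes "connected_g V E" and "x \<in> V" and "y \<in> V"
  obtains xs where "walk E xs" "length xs = Suc (dist_g E x y)" "hd xs = x" "last xs = y"
proof -
  obtain xs where xs: "walk E xs" "hd xs = x" "last xs = y"
    using assms unfolding connected_g_def by blast
  then have "length xs = Suc (length xs - 1)"
    unfolding walk_def by simp
  then have "\<exists>n xs. walk E xs \<and> length xs = Suc n \<and> hd xs = x \<and> last xs = y"
    using xs by blast
  then have "\<exists>xs. walk E xs \<and> length xs = Suc (dist_g E x y) \<and> hd xs = x \<and> last xs = y"
    unfolding dist_g_def by (rule LeastI_ex)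
  then show ?thesis
    using that by blast
qed

lemma dist_g_self: "dist_g E x x = 0"
  using dist_g_le_walk[of E "[x]" x x] unfolding walk_def by simp

lemma dist_g_eq_0D:
  assumes "connected_g V E" and "x \<in> V" and "y \<in> V" and "dist_g E x y = 0"
  shows "x = y"
proof -
  obtain xs where "length xs = 1" "hd xs = x" "last xs = y"
    using dist_g_shortest_walk[OF assms(1-3)] assms(4) by auto
  then show ?thesis
    by (cases xs) auto
qed

lemma dist_g_edge_le:
  assumes "connected_g V E" and "x \<in> V" and "y \<in> V" and "E y z"
  shows "dist_g E x z \<le> dist_g E x y + 1"
proof -
  obtain xs where xs: "walk E xs" "length xs = Suc (dist_g E x y)" "hd xs = x" "last xs = y"
    using dist_g_shortest_walk[OF assms(1-3)] .
  have "walk E (xs @ [z])"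
    using walk_snoc[OF xs(1)] xs(4) assms(4) by simp
  moreover have "hd (xs @ [z]) = x"
    using xs unfolding walk_def by simp
  ultimately show ?thesis
    using dist_g_le_walk[of E "xs @ [z]" x z] xs(2) by simp
qed

lemma dist_g_edge:
  assumes "simple_graph V E" and "connected_g V E" and "E x z"
  shows "dist_g E x z = 1"
proof -
  have "x \<in> V" "z \<in> V" "x \<noteq> z"
    using assms unfolding simple_graph_def by auto
  then show ?thesis
    using dist_g_edge_le[OF assms(2), of x x z] dist_g_self[of E x] dist_g_eq_0D[OF assms(2), of x z] assms(3)
    by fastforce
qed

lemma dist_g_Suc_predecessor:
  assumes "simple_graph V E" and "connected_g V E" and "x \<in> V" and "y \<in> V"
    and "dist_g E x y = Suc n"
  obtains z where "z \<in> V" "E z y" "dist_g E x z = n"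
proof -
  obtain xs where xs: "walk E xs" "length xs = Suc (Suc n)" "hd xs = x" "last xs = y"
    using dist_g_shortest_walk[OF assms(2-4)] assms(5) by auto
  define z where "z = xs ! n"
  have "E z y"
    using xs unfolding walk_def z_def by (auto simp: last_conv_nth)
  then have "z \<in> V"
    using assms(1) unfolding simple_graph_def by auto
  have "hd (take (Suc n) xs) = x"
    using xs(2,3) by (cases xs) auto
  moreover have "last (take (Suc n) xs) = z"
    using xs(2) unfolding z_def by (simp add: take_Suc_conv_app_nth)
  ultimately have "dist_g E x z \<le> n"
    using dist_g_le_walk[OF walk_take[OF xs(1)], of "Suc n"] xs(2) by simp
  moreover have "Suc n \<le> dist_g E x z + 1"
    using dist_g_edge_le[OF assms(2,3) \<open>z \<in> V\<close> \<open>E z y\<close>] assms(5) by simp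
  ultimately show ?thesis
    using that \<open>z \<in> V\<close> \<open>E z y\<close> by simp
qed

lemma distance_regularD:
  assumes "distance_regular V E"
  shows "finite V" "V \<noteq> {}" "simple_graph V E" "connected_g V E"
  using assms unfolding distance_regular_def by auto

lemma c_i_dist_g:
  "distance_regular V E \<Longrightarrow> x \<in> V \<Longrightarrow> y \<in> V \<Longrightarrow> c_i V E (dist_g E x y) = c_cnt V E x y"
  unfolding distance_regular_def c_i_def by (smt (verit) someI_ex)

lemma a_i_dist_g:
  "distance_regular V E \<Longrightarrow> x \<in> V \<Longrightarrow> y \<in> V \<Longrightarrow> a_i V E (dist_g E x y) = a_cnt V E x y"
  unfolding distance_regular_def a_i_def by (smt (verit) someI_ex)

lemma b_i_dist_g:
  "distance_regular V E \<Longrightarrow> x \<in> V \<Longrightarrow> y \<in> V \<Longrightarrow> b_i V E (dist_g E x y) = b_cnt V E x y"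
  unfolding distance_regular_def b_i_def by (smt (verit) someI_ex)

lemma diameter_attained:
  assumes "distance_regular V E"
  obtains x y where "x \<in> V" "y \<in> V" "dist_g E x y = diameter V E"
proof -
  have "{dist_g E x y | x y. x \<in> V \<and> y \<in> V} = (\<lambda>(x, y). dist_g E x y) ` (V \<times> V)"
    by auto
  then have "finite {dist_g E x y | x y. x \<in> V \<and> y \<in> V}"
    using distance_regularD(1)[OF assms] by simp
  moreover have "{dist_g E x y | x y. x \<in> V \<and> y \<in> V} \<noteq> {}"
    using distance_regularD(2)[OF assms] by auto
  ultimately have "diameter V E \<in> {dist_g E x y | x y. x \<in> V \<and> y \<in> V}"
    unfolding diameter_def by (rule Max_in)
  then show ?thesis
    using that by auto
qed

lemma distance_attained:
  assumes "distance_regular V E" and "m \<le> diameter V E"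
  obtains x y where "x \<in> V" "y \<in> V" "dist_g E x y = m"
proof -
  note G = distance_regularD[OF assms(1)]
  have "\<exists>x\<in>V. \<exists>y\<in>V. dist_g E x y = diameter V E - j" if "j \<le> diameter V E" for j
    using that
  proof (induction j)
    case 0
    obtain x y where "x \<in> V" "y \<in> V" "dist_g E x y = diameter V E"
      using diameter_attained[OF assms(1)] .
    then show ?case
      by auto
  next
    case (Suc j)
    then have "\<exists>x\<in>V. \<exists>y\<in>V. dist_g E x y = Suc (diameter V E - Suc j)"
      by (simp add: Suc_diff_Suc)
    then obtain x y where "x \<in> V" "y \<in> V" "dist_g E x y = Suc (diameter V E - Suc j)"
      by blast
    then obtain z where "z \<in> V" "dist_g E x z = diameter V E - Suc j"
      using dist_g_Suc_predecessor[OF G(3,4)] by blast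
    then show ?case
      using \<open>x \<in> V\<close> by blast
  qed
  from this[of "diameter V E - m"] show ?thesis
    using assms(2) that by auto
qed

lemma cnt_sum_eq_degree:
  assumes "distance_regular V E" and "x \<in> V" and "y \<in> V"
  shows "c_cnt V E x y + a_cnt V E x y + b_cnt V E x y = card {z \<in> V. E y z}"
proof -
  note G = distance_regularD[OF assms(1)]
  let ?d = "dist_g E x y"
  define C where "C = {z \<in> V. E y z \<and> dist_g E x z + 1 = ?d}"
  define A where "A = {z \<in> V. E y z \<and> dist_g E x z = ?d}"
  define B where "B = {z \<in> V. E y z \<and> dist_g E x z = ?d + 1}"
  have "{z \<in> V. E y z} \<subseteq> C \<union> A \<union> B"
  proof
    fix z assume z: "z \<in> {z \<in> V. E y z}"
    then have "E z y"
      using G(3) unfolding simple_graph_def by auto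
    then show "z \<in> C \<union> A \<union> B"
      using z dist_g_edge_le[OF G(4) assms(2,3), of z] dist_g_edge_le[OF G(4) assms(2), of z y]
      unfolding C_def A_def B_def by auto
  qed
  then have "{z \<in> V. E y z} = C \<union> A \<union> B"
    unfolding C_def A_def B_def by auto
  moreover have "finite C" "finite A" "finite B"
    using G(1) unfolding C_def A_def B_def by auto
  moreover have "C \<inter> A = {}" "(C \<union> A) \<inter> B = {}"
    unfolding C_def A_def B_def by auto
  ultimately show ?thesis
    unfolding c_cnt_def a_cnt_def b_cnt_def C_def A_def B_def by (simp add: card_Un_disjoint)
qed

lemma b_i_0_eq_degree:
  assumes "distance_regular V E" and "y \<in> V"
  shows "b_i V E 0 = card {z \<in> V. E y z}"
proof -
  note G = distance_regularD[OF assms(1)]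
  have "{z \<in> V. E y z \<and> dist_g E y z = dist_g E y y + 1} = {z \<in> V. E y z}"
    using dist_g_edge[OF G(3,4)] dist_g_self[of E y] by auto
  then show ?thesis
    using b_i_dist_g[OF assms(1,2,2)] unfolding b_cnt_def dist_g_self by simp
qed

lemma intersection_numbers_sum:
  assumes "distance_regular V E" and "i \<le> diameter V E"
  shows "a_i V E i + b_i V E i + c_i V E i = b_i V E 0"
proof -
  obtain x y where xy: "x \<in> V" "y \<in> V" "dist_g E x y = i"
    using distance_attained[OF assms] .
  then have "c_i V E i = c_cnt V E x y" "a_i V E i = a_cnt V E x y" "b_i V E i = b_cnt V E x y"
    using c_i_dist_g[OF assms(1) xy(1,2)] a_i_dist_g[OF assms(1) xy(1,2)] b_i_dist_g[OF assms(1) xy(1,2)]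
    by simp_all
  then show ?thesis
    using cnt_sum_eq_degree[OF assms(1) xy(1,2)] b_i_0_eq_degree[OF assms(1) xy(2)] by simp
qed

lemma c_i_0:
  assumes "distance_regular V E"
  shows "c_i V E 0 = 0"
proof -
  obtain x where "x \<in> V"
    using distance_regularD(2)[OF assms] by auto
  then show ?thesis
    using c_i_dist_g[OF assms, of x x] unfolding c_cnt_def dist_g_self by simp
qed

lemma c_i_1:
  assumes "distance_regular V E" and "1 \<le> diameter V E"
  shows "c_i V E 1 = 1"
proof -
  note G = distance_regularD[OF assms(1)]
  obtain x y where xy: "x \<in> V" "y \<in> V" "dist_g E x y = 1"
    using distance_attained[OF assms] .
  obtain z where "z \<in> V" "E z y" "dist_g E x z = 0"
    using dist_g_Suc_predecessor[OF G(3,4) xy(1,2), of 0] xy(3) by auto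
  then have "E x y"
    using dist_g_eq_0D[OF G(4) xy(1)] by blast
  then have "E y x"
    using G(3) unfolding simple_graph_def by blast
  then have "{z \<in> V. E y z \<and> dist_g E x z + 1 = dist_g E x y} = {x}"
    using xy dist_g_eq_0D[OF G(4) xy(1)] dist_g_self[of E x] by auto
  then show ?thesis
    using c_i_dist_g[OF assms(1) xy(1,2)] xy(3) unfolding c_cnt_def by simp
qed

lemma b_i_pos:
  assumes "distance_regular V E" and "i < diameter V E"
  shows "0 < b_i V E i"
proof -
  note G = distance_regularD[OF assms(1)]
  obtain x y where xy: "x \<in> V" "y \<in> V" "dist_g E x y = Suc i"
    using distance_attained[OF assms(1), of "Suc i"] assms(2) by auto
  obtain z where z: "z \<in> V" "E z y" "dist_g E x z = i"
    using dist_g_Suc_predecessor[OF G(3,4) xy] .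
  have "y \<in> {w \<in> V. E z w \<and> dist_g E x w = dist_g E x z + 1}"
    using xy z by simp
  then have "0 < b_cnt V E x z"
    using G(1) unfolding b_cnt_def by (auto simp: card_gt_0_iff)
  then show ?thesis
    using b_i_dist_g[OF assms(1) xy(1) z(1)] z(3) by simp
qed

lemma intersection_array_distance_regular:
  assumes "distance_regular V E" and "2 \<le> diameter V E"
  shows "intersection_array (diameter V E) (b_i V E 0)
           (\<lambda>i. a_i V E i) (\<lambda>i. b_i V E i) (\<lambda>i. c_i V E i)"
proof
  show "real (a_i V E i) + real (b_i V E i) + real (c_i V E i) = real (b_i V E 0)"
    if "i < diameter V E" for i
    using intersection_numbers_sum[OF assms(1), of i] that by (metis less_imp_le of_nat_add)
qed (use assms c_i_0[OF assms(1)] c_i_1[OF assms(1)] b_i_pos[OF assms(1)] in auto)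

theorem theorem7p1:
  fixes V :: "'a set" and E :: "'a \<Rightarrow> 'a \<Rightarrow> bool" and \<sigma> \<rho> :: "nat \<Rightarrow> real"
  assumes "distance_regular V E"
    and "diameter V E \<ge> 3"
    and "nontrivial_pcs V E \<sigma>"
    and "nontrivial_pcs V E \<rho>"
  shows "tight_pair V E \<sigma> \<rho> \<longleftrightarrow>
    (\<exists>\<epsilon>::real. \<forall>i\<in>{1..diameter V E}.
        \<sigma> i * \<rho> i - \<sigma> (i - 1) * \<rho> (i - 1) = \<epsilon> * (\<sigma> (i - 1) * \<rho> i - \<sigma> i * \<rho> (i - 1)))"
proof -
  interpret G: intersection_array "diameter V E" "b_i V E 0"
    "\<lambda>i. a_i V E i" "\<lambda>i. b_i V E i" "\<lambda>i. c_i V E i"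
    using intersection_array_distance_regular[OF assms(1)] assms(2) by simp
  have pseudo_cosine_eq: "pseudo_cosine_seq V E = G.pseudo_cosine"
    unfolding pseudo_cosine_seq_def G.pseudo_cosine_def by (intro ext) simp
  obtain \<theta> \<eta> where \<sigma>: "G.pseudo_cosine \<theta> \<sigma>" and "\<sigma> 1 \<noteq> 1" and \<rho>: "G.pseudo_cosine \<eta> \<rho>"
    using assms(3,4) unfolding nontrivial_pcs_def is_pseudo_cosine_def pseudo_cosine_eq by blast
  have "tight_pair V E \<sigma> \<rho> \<longleftrightarrow> (\<exists>\<zeta>. G.pseudo_cosine \<zeta> (\<lambda>i. \<sigma> i * \<rho> i))"
    using \<sigma> \<rho> unfolding tight_pair_def is_pseudo_cosine_def pseudo_cosine_eq by blast
  also have "\<dots> \<longleftrightarrow> (\<exists>\<epsilon>. \<forall>i\<in>{1..diameter V E}. G.epsilon_defect \<epsilon> \<sigma> \<rho> i = 0)"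
    by (rule G.pseudo_cosine_product_iff_epsilon[OF \<sigma> \<rho> \<open>\<sigma> 1 \<noteq> 1\<close>])
  finally show ?thesis
    unfolding G.epsilon_defect_def by simp
qed
end
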